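(* Let $d\ge2$, $\delta\in[0,1/d)$, and let $N$ be a $d\times d$ $\delta$-upper bounded noise matrix. There exists a stochastic matrix $P$ such that $N\cdot P$ is $\delta'$-uniform, where $\delta'=f(\delta)$ with $$f(0)=0,\qquad f(\delta)=\left(d+\frac{1}{2}\cdot\frac{1}{(d-1)^2}\cdot\frac{1-d\delta}{\delta}\right)^{-1}\ \text{for }\delta\in(0,1/d).$$
   Context: A matrix is stochastic if its entries are non-negative and each row sums to $1$. For $\delta\in[0,1/d]$, a stochastic $d\times d$ matrix $N$ is: - $\delta$-upper bounded if $N_{i,i}\ge1-(d-1)\delta$ for all $i$ and $N_{i,j}\le\delta$ for all $i\ne j$; - $\delta$-uniform if $N_{i,i}=1-(d-1)\delta$ and $N_{i,j}=\delta$ for all $i\ne j$. *)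

theory Defs
  imports "HOL-Analysis.Analysis"
begin

text \<open>A real square matrix indexed by a finite type 'd (so d = CARD('d)).\<close>

definition stochastic :: "real^'d^'d \<Rightarrow> bool" where
  "stochastic M \<longleftrightarrow> (\<forall>i j. M $ i $ j \<ge> 0) \<and> (\<forall>i. (\<Sum>j\<in>UNIV. M $ i $ j) = 1)"

definition upper_bounded :: "real \<Rightarrow> real^'d^'d \<Rightarrow> bool" where
  "upper_bounded \<delta> N \<longleftrightarrow> stochastic N \<and>
     (\<forall>i. N $ i $ i \<ge> 1 - (real CARD('d) - 1) * \<delta>) \<and>
     (\<forall>i j. i \<noteq> j \<longrightarrow> N $ i $ j \<le> \<delta>)"

definition uniform_noise :: "real \<Rightarrow> real^'d^'d \<Rightarrow> bool" where
  "uniform_noise \<delta> N \<longleftrightarrow> stochastic N \<and>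
     (\<forall>i. N $ i $ i = 1 - (real CARD('d) - 1) * \<delta>) \<and>
     (\<forall>i j. i \<noteq> j \<longrightarrow> N $ i $ j = \<delta>)"

definition f_delta :: "nat \<Rightarrow> real \<Rightarrow> real" where
  "f_delta d \<delta> = (if \<delta> = 0 then 0 else
     inverse (real d + (1/2) * (1 / (real d - 1)^2) * ((1 - real d * \<delta>) / \<delta>)))"

end

theory Submission
  imports Defs
begin

text \<open>
  Write \<open>N = \<delta> J + (1 - d \<delta>) M\<close> with \<open>J\<close> the all-ones matrix. Then \<open>M\<close> has row sums 1 and
  non-positive off-diagonal entries, so by the minimum principle it is invertible with a
  stochastic inverse \<open>B\<close>. Hence \<open>N B = \<delta> 1 c\<^sup>T + (1 - d \<delta>) I\<close>, where \<open>c\<close> collects the column sums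
  of \<open>B\<close>, so \<open>0 \<le> c\<close> and \<open>\<Sum> c = d\<close>. A matrix of the form \<open>1 v\<^sup>T + a I\<close> is turned into a
  \<open>\<delta>'\<close>-uniform one by the stochastic matrix \<open>\<kappa> I + 1 w\<^sup>T\<close> with \<open>\<kappa> = (1 - d \<delta>') / a\<close> and
  \<open>w = \<delta>' 1 - \<kappa> v\<close>, as long as \<open>w \<ge> 0\<close>. With \<open>v = \<delta> c \<le> d \<delta> 1\<close> this reduces to the scalar
  inequality \<open>d \<delta> (1 - d \<delta>') \<le> (1 - d \<delta>) \<delta>'\<close>, which for \<open>\<delta>' = f(\<delta>)\<close> amounts to \<open>d \<le> 2 (d - 1)\<^sup>2\<close>.
\<close>

lemma nonneg_if_Z_matrix_mult_nonneg:
  fixes M :: "real^'n^'n" and x :: "real^'n"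
  assumes off_diag: "\<And>i j. i \<noteq> j \<Longrightarrow> M$i$j \<le> 0"
    and row_sum: "\<And>i. (\<Sum>j\<in>UNIV. M$i$j) > 0"
    and Mx: "\<And>i. (M *v x)$i \<ge> 0"
  shows "x$i \<ge> 0"
proof -
  obtain k where k: "\<And>j. x$k \<le> x$j"
    using ex_is_arg_min_if_finite[OF finite_class.finite_UNIV UNIV_not_empty, of "\<lambda>j. x$j"]
    unfolding is_arg_min_def by (auto simp: not_less)
  have "(M *v x)$k - (\<Sum>j\<in>UNIV. M$k$j) * x$k = (\<Sum>j\<in>UNIV. M$k$j * (x$j - x$k))"
    by (simp add: matrix_vector_mult_def right_diff_distrib sum_subtractf sum_distrib_right)
  also have "\<dots> \<le> 0"
    using off_diag k by (intro sum_nonpos) (metis diff_ge_0_iff_ge mult_nonpos_nonneg mult_zero_right right_minus_eq)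
  finally have "(\<Sum>j\<in>UNIV. M$k$j) * x$k \<ge> 0"
    using Mx[of k] by linarith
  then have "x$k \<ge> 0"
    using row_sum[of k] by (simp add: zero_le_mult_iff)
  then show ?thesis
    using k[of i] by linarith
qed

lemma stochastic_iff_mult_ones:
  "stochastic M \<longleftrightarrow> (\<forall>i j. M$i$j \<ge> 0) \<and> M *v 1 = 1"
  by (simp add: stochastic_def matrix_vector_mult_def vec_eq_iff)

lemma stochastic_matrix_mult:
  assumes "stochastic A" and "stochastic B"
  shows "stochastic (A ** B)"
proof -
  have "(A ** B) *v 1 = 1"
    using assms by (simp add: stochastic_iff_mult_ones flip: matrix_vector_mul_assoc)
  moreover have "(A ** B)$i$j \<ge> 0" for i j
    using assms by (auto simp: stochastic_def matrix_matrix_mult_def intro!: sum_nonneg)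
  ultimately show ?thesis
    by (simp add: stochastic_iff_mult_ones)
qed

lemma Z_matrix_has_stochastic_inverse:
  fixes M :: "real^'n^'n"
  assumes off_diag: "\<And>i j. i \<noteq> j \<Longrightarrow> M$i$j \<le> 0"
    and row_sum: "\<And>i. (\<Sum>j\<in>UNIV. M$i$j) = 1"
  obtains B where "M ** B = mat 1" and "stochastic B"
proof -
  have min_principle: "x$i \<ge> 0" if "\<And>i. (M *v x)$i \<ge> 0" for x :: "real^'n" and i
    using nonneg_if_Z_matrix_mult_nonneg[OF off_diag] row_sum that by simp
  have "x = 0" if "M *v x = 0" for x :: "real^'n"
  proof -
    have "M *v (-x) = 0"
      using that matrix_vector_mult_diff_distrib[of M 0 x] by simp
    have "x$i \<ge> 0" for i
      by (rule min_principle) (simp add: that)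
    moreover have "(-x)$i \<ge> 0" for i
      by (rule min_principle) (simp add: \<open>M *v (-x) = 0\<close>)
    ultimately show ?thesis
      by (simp add: vec_eq_iff) (meson antisym neg_0_le_iff_le)
  qed
  then obtain B where BM: "B ** M = mat 1"
    using matrix_left_invertible_ker by blast
  then have MB: "M ** B = mat 1"
    using matrix_left_right_inverse by blast
  have "B$i$j \<ge> 0" for i j
  proof -
    have "M *v column j B = (M ** B) *v axis j 1"
      by (simp add: matrix_vector_mult_basis[symmetric] matrix_vector_mul_assoc)
    then have "M *v column j B = axis j 1"
      by (simp add: MB)
    have "column j B $ i \<ge> 0"
      by (rule min_principle) (simp add: \<open>M *v column j B = axis j 1\<close> axis_def)
    then show ?thesis
      by (simp add: column_def)
  qed
  moreover have "B *v 1 = 1"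
  proof -
    have "M *v 1 = 1"
      using row_sum by (simp add: matrix_vector_mult_def vec_eq_iff)
    then show ?thesis
      by (metis BM matrix_vector_mul_assoc matrix_vector_mul_lid)
  qed
  ultimately show ?thesis
    using that MB by (simp add: stochastic_iff_mult_ones)
qed

lemma upper_bounded_decomposition:
  fixes N :: "real^'d^'d"
  assumes N: "upper_bounded \<delta> N" and small: "real CARD('d) * \<delta> < 1"
  obtains M where "\<And>i j. i \<noteq> j \<Longrightarrow> M$i$j \<le> 0" and "\<And>i. (\<Sum>j\<in>UNIV. M$i$j) = 1"
    and "\<And>i j. N$i$j = \<delta> + (1 - real CARD('d) * \<delta>) * M$i$j"
proof
  let ?M = "\<chi> i j. (N$i$j - \<delta>) / (1 - real CARD('d) * \<delta>)"
  have pos: "1 - real CARD('d) * \<delta> > 0"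
    using small by simp
  have off_diag: "N$i$j \<le> \<delta>" if "i \<noteq> j" for i j
    using N that unfolding upper_bounded_def by blast
  have row_sum: "(\<Sum>j\<in>UNIV. N$i$j) = 1" for i
    using N unfolding upper_bounded_def stochastic_def by blast
  show "?M$i$j \<le> 0" if "i \<noteq> j" for i j
    using off_diag[OF that] pos by (simp add: divide_nonpos_pos)
  show "(\<Sum>j\<in>UNIV. ?M$i$j) = 1" for i
    using row_sum[of i] pos by (simp add: sum_divide_distrib[symmetric] sum_subtractf)
  show "N$i$j = \<delta> + (1 - real CARD('d) * \<delta>) * ?M$i$j" for i j
    using pos by simp
qed

lemma f_delta_bounds:
  assumes d: "2 \<le> d" and "0 \<le> \<delta>" and small: "real d * \<delta> < 1"
  shows "0 \<le> f_delta d \<delta>" and "real d * f_delta d \<delta> \<le> 1"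
    and "real d * \<delta> * (1 - real d * f_delta d \<delta>) \<le> (1 - real d * \<delta>) * f_delta d \<delta>"
proof -
  consider "\<delta> = 0" | "\<delta> > 0"
    using \<open>0 \<le> \<delta>\<close> by linarith
  then have "0 \<le> f_delta d \<delta> \<and> real d * f_delta d \<delta> \<le> 1 \<and>
      real d * \<delta> * (1 - real d * f_delta d \<delta>) \<le> (1 - real d * \<delta>) * f_delta d \<delta>"
  proof cases
    case 1
    then show ?thesis by (simp add: f_delta_def)
  next
    case 2
    define A where "A = (1/2) * (1 / (real d - 1)^2) * ((1 - real d * \<delta>) / \<delta>)"
    have "(real d - 1)^2 > 0"
      using d by simp
    then have A: "A > 0"
      using 2 small by (simp add: A_def)
    have e: "f_delta d \<delta> = 1 / (real d + A)"
      using 2 by (simp add: f_delta_def A_def inverse_eq_divide)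
    have one_minus: "1 - real d * f_delta d \<delta> = A * f_delta d \<delta>"
      using A by (simp add: e field_simps)
    have "2 * (real d - 1)^2 - real d = (2 * real d - 1) * (real d - 2)"
      by (simp add: power2_eq_square algebra_simps)
    also have "\<dots> \<ge> 0"
      using d by (intro mult_nonneg_nonneg) auto
    finally have "real d / (2 * (real d - 1)^2) \<le> 1"
      using \<open>(real d - 1)^2 > 0\<close> by simp
    then have "real d * \<delta> * A = real d / (2 * (real d - 1)^2) * (1 - real d * \<delta>)"
      using 2 by (simp add: A_def)
    also have "\<dots> \<le> 1 - real d * \<delta>"
      using small \<open>real d / (2 * (real d - 1)^2) \<le> 1\<close> by (intro mult_left_le_one_le) auto
    finally have "real d * \<delta> * A \<le> 1 - real d * \<delta>" .
    have e_nonneg: "f_delta d \<delta> \<ge> 0"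
      using A by (simp add: e)
    have "real d * \<delta> * (1 - real d * f_delta d \<delta>) = real d * \<delta> * A * f_delta d \<delta>"
      by (simp add: one_minus)
    also have "\<dots> \<le> (1 - real d * \<delta>) * f_delta d \<delta>"
      using \<open>real d * \<delta> * A \<le> 1 - real d * \<delta>\<close> e_nonneg by (rule mult_right_mono)
    moreover have "A * f_delta d \<delta> \<ge> 0"
      using A e_nonneg by simp
    ultimately show ?thesis
      using e_nonneg one_minus by linarith
  qed
  then show "0 \<le> f_delta d \<delta>" and "real d * f_delta d \<delta> \<le> 1"
    and "real d * \<delta> * (1 - real d * f_delta d \<delta>) \<le> (1 - real d * \<delta>) * f_delta d \<delta>"
    by auto
qed

lemma upper_bounded_reduces_to_rank_one_plus_scalar:
  fixes N :: "real^'d^'d"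
  assumes "upper_bounded \<delta> N" and "real CARD('d) * \<delta> < 1"
  obtains B where "stochastic B"
    and "\<And>i j. (N ** B)$i$j = \<delta> * (\<Sum>k\<in>UNIV. B$k$j) + (if i = j then 1 - real CARD('d) * \<delta> else 0)"
proof -
  obtain M where M: "\<And>i j. i \<noteq> j \<Longrightarrow> M$i$j \<le> 0" "\<And>i. (\<Sum>j\<in>UNIV. M$i$j) = 1"
    and N: "\<And>i j. N$i$j = \<delta> + (1 - real CARD('d) * \<delta>) * M$i$j"
    using upper_bounded_decomposition[OF assms] by blast
  obtain B where MB: "M ** B = mat 1" and "stochastic B"
    using Z_matrix_has_stochastic_inverse[OF M] by blast
  moreover have "(N ** B)$i$j = \<delta> * (\<Sum>k\<in>UNIV. B$k$j) + (1 - real CARD('d) * \<delta>) * (M ** B)$i$j" for i j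
    by (simp add: matrix_matrix_mult_def N distrib_right sum.distrib sum_distrib_left mult.assoc)
  ultimately show ?thesis
    using that by (simp add: MB mat_def)
qed

lemma stochastic_sum_entries:
  fixes B :: "real^'n^'n"
  assumes "stochastic B"
  shows "(\<Sum>j\<in>UNIV. \<Sum>k\<in>UNIV. B$k$j) = real CARD('n)"
  using assms unfolding stochastic_def by (subst sum.swap) simp

lemma stochastic_column_sum_le:
  fixes B :: "real^'n^'n"
  assumes "stochastic B"
  shows "(\<Sum>k\<in>UNIV. B$k$j) \<le> real CARD('n)"
proof -
  have "(\<Sum>k\<in>UNIV. B$k$j) \<le> (\<Sum>j\<in>UNIV. \<Sum>k\<in>UNIV. B$k$j)"
    using assms unfolding stochastic_def by (intro member_le_sum) (auto intro: sum_nonneg)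
  then show ?thesis
    using stochastic_sum_entries[OF assms] by simp
qed

lemma uniform_noiseI:
  fixes A :: "real^'d^'d"
  assumes "0 \<le> e" and "real CARD('d) * e \<le> 1"
    and A: "\<And>i j. A$i$j = e + (if i = j then 1 - real CARD('d) * e else 0)"
  shows "uniform_noise e A"
  using assms unfolding uniform_noise_def stochastic_def
  by (auto simp: A sum.distrib algebra_simps)

lemma scalar_plus_rank_one_uniformizable:
  fixes R :: "real^'d^'d" and v :: "'d \<Rightarrow> real"
  assumes R: "\<And>i j. R$i$j = v j + (if i = j then a else 0)"
    and a: "0 < a" and sum_v: "sum v UNIV = 1 - a"
    and e: "0 \<le> e" "real CARD('d) * e \<le> 1"
    and v: "\<And>j. v j \<le> b" and b: "b * (1 - real CARD('d) * e) \<le> a * e"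
  obtains Q where "stochastic Q" and "uniform_noise e (R ** Q)"
proof
  define \<kappa> where "\<kappa> = (1 - real CARD('d) * e) / a"
  define w where "w j = e - \<kappa> * v j" for j
  let ?Q = "\<chi> i j. (if i = j then \<kappa> else 0) + w j"
  have "0 \<le> \<kappa>"
    using e a by (simp add: \<kappa>_def)
  moreover have "0 \<le> w j" for j
  proof -
    have "\<kappa> * b \<le> e"
      using b a by (simp add: \<kappa>_def field_simps)
    moreover have "\<kappa> * v j \<le> \<kappa> * b"
      using v \<open>0 \<le> \<kappa>\<close> by (rule mult_left_mono)
    ultimately show ?thesis
      by (simp add: w_def)
  qed
  moreover have "(\<Sum>j\<in>UNIV. ?Q$i$j) = 1" for i
  proof -
    have "(\<Sum>j\<in>UNIV. ?Q$i$j) = \<kappa> + (real CARD('d) * e - \<kappa> * sum v UNIV)"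
      by (simp add: sum.distrib w_def sum_subtractf sum_distrib_left)
    also have "\<dots> = 1"
      using a by (simp add: sum_v \<kappa>_def field_simps)
    finally show ?thesis .
  qed
  ultimately show "stochastic ?Q"
    by (simp add: stochastic_def)
  have "(\<Sum>k\<in>UNIV. R$i$k) = 1" for i
    by (simp add: R sum.distrib sum_v)
  then have product: "(R ** ?Q)$i$j = \<kappa> * R$i$j + w j" for i j
    unfolding matrix_matrix_mult_def
    by (simp add: distrib_left sum.distrib sum_distrib_right[symmetric] if_distrib[of "\<lambda>x. _ * x"] cong: if_cong)
  have "(R ** ?Q)$i$j = e + (if i = j then 1 - real CARD('d) * e else 0)" for i j
    unfolding product using a by (cases "i = j") (simp_all add: R w_def \<kappa>_def field_simps)
  then show "uniform_noise e (R ** ?Q)"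
    using e by (intro uniform_noiseI)
qed

theorem proposition16:
  fixes N :: "real^'d^'d" and \<delta> :: real
  assumes "CARD('d) \<ge> 2"
    and "0 \<le> \<delta>" and "\<delta> < 1 / real CARD('d)"
    and "upper_bounded \<delta> N"
  shows "\<exists>P :: real^'d^'d. stochastic P \<and> uniform_noise (f_delta CARD('d) \<delta>) (N ** P)"
proof -
  let ?d = "real CARD('d)" and ?e = "f_delta CARD('d) \<delta>"
  have small: "?d * \<delta> < 1"
    using assms(3) by (simp add: field_simps)
  obtain B where B: "stochastic B"
    and NB: "\<And>i j. (N ** B)$i$j = \<delta> * (\<Sum>k\<in>UNIV. B$k$j) + (if i = j then 1 - ?d * \<delta> else 0)"
    using upper_bounded_reduces_to_rank_one_plus_scalar[OF assms(4) small] by blast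
  have "0 < 1 - ?d * \<delta>"
    using small by simp
  moreover have "(\<Sum>j\<in>UNIV. \<delta> * (\<Sum>k\<in>UNIV. B$k$j)) = 1 - (1 - ?d * \<delta>)"
    using stochastic_sum_entries[OF B] by (simp add: sum_distrib_left[symmetric])
  moreover have "\<delta> * (\<Sum>k\<in>UNIV. B$k$j) \<le> ?d * \<delta>" for j
    using stochastic_column_sum_le[OF B] assms(2) by (simp add: mult_left_mono mult.commute)
  ultimately obtain Q where Q: "stochastic Q" and NBQ: "uniform_noise ?e ((N ** B) ** Q)"
    by (rule scalar_plus_rank_one_uniformizable[OF NB _ _ f_delta_bounds(1,2)[OF assms(1,2) small]
          _ f_delta_bounds(3)[OF assms(1,2) small]])
  show ?thesis
  proof (intro exI conjI)
    show "stochastic (B ** Q)"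
      using B Q by (rule stochastic_matrix_mult)
    show "uniform_noise ?e (N ** (B ** Q))"
      using NBQ by (simp only: matrix_mul_assoc)
  qed
qed

end
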